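(* Let $u:\mathbb{T}\to\mathbb{R}$ be smooth. Let $\gamma,\beta>0$ be constants and let $v>0$ (possibly random) be given, and let $\alpha\in(0,\tfrac12)$. Then there exist constants $C,q>0$ depending only on $\gamma,\beta,\alpha$ (and $u$) such that, with parameters $\zeta=(\nu,t,y)$ ranging over $\nu\in(0,1]$, $t\in(0,\nu^{-1}]$, $y\in\mathbb{T}$, the almost implication $$\det(M_t)(y)\le\epsilon\, v\,t^{\gamma}\nu^{\beta}\ \Rightarrow_\epsilon\ \sup_{s\in[0,t]}|u'(y+\sqrt\nu B_s)|\le C\epsilon^q\max\Big\{v^{\frac12}t^{\frac{\gamma-3}{2}}\nu^{\frac\beta2},\ \big(v^\alpha t^{\alpha(\gamma-3)}\nu^{\alpha\beta}h^3\nu^{\frac32}t^{\frac32}\big)^{\frac1{3+2\alpha}},\ \big(v^{\frac\alpha2}t^{\frac{\alpha(\gamma-3)+1}{2}}\nu^{\frac{\alpha\beta+1}{2}}h\big)^{\frac1{1+\alpha}}\Big\}$$ holds, where $h=h(y,\nu,t)=\sup_{s,z\in[0,t],\,\tau\in[0,1]}|u''(y+\sqrt\nu(\tau B_s+(1-\tau)B_z))|$.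
   Context: $(B_t)$ is a standard Brownian motion and $\det(M_t)(y):=\int_0^t\big(\int_r^t u'(y+\sqrt\nu B_s)\,ds-\frac1t\int_0^t\int_m^t u'(y+\sqrt\nu B_s)\,ds\,dm\big)^2dr$. Almost-false terminology: a family of events $A^\zeta_\epsilon$ indexed by parameters $\zeta$ and $\epsilon>0$ is almost false if for every $p>0$ there exist $C_p$ and $\epsilon_0>0$, both independent of $\zeta$, with $\mathbb P(A^\zeta_\epsilon)\le C_p\epsilon^p$ for all $\zeta$ and all $\epsilon\in(0,\epsilon_0]$. One writes $A^\zeta_\epsilon\Rightarrow_\epsilon B^\zeta_\epsilon$ if $A^\zeta_\epsilon\setminus B^\zeta_\epsilon$ is almost false, and $Z\le_\epsilon W$ if $\{Z^\zeta_\epsilon>W^\zeta_\epsilon\}$ is almost false. *)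

theory Defs
  imports "HOL-Probability.Probability"
begin

text \<open>The torus T is identified with R modulo 2 pi; functions on T are 2pi-periodic functions on R.\<close>
definition smooth_periodic :: "(real \<Rightarrow> real) \<Rightarrow> bool" where
  "smooth_periodic u \<longleftrightarrow>
     (\<forall>n. \<forall>x. ((deriv ^^ n) u) differentiable (at x)) \<and> (\<forall>x. u (x + 2 * pi) = u x)"

definition std_brownian_motion :: "'a measure \<Rightarrow> (real \<Rightarrow> 'a \<Rightarrow> real) \<Rightarrow> bool" where
  "std_brownian_motion M B \<longleftrightarrow>
     prob_space M \<and>
     (\<forall>t\<ge>0. B t \<in> borel_measurable M) \<and>
     (\<forall>\<omega>\<in>space M. B 0 \<omega> = 0 \<and> continuous_on {0..} (\<lambda>t. B t \<omega>)) \<and>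
     (\<forall>s t. 0 \<le> s \<longrightarrow> s < t \<longrightarrow>
        distributed M lborel (\<lambda>\<omega>. B t \<omega> - B s \<omega>)
          (\<lambda>x. ennreal (normal_density 0 (sqrt (t - s)) x))) \<and>
     (\<forall>(ts :: nat \<Rightarrow> real) n. 0 \<le> ts 0 \<longrightarrow> (\<forall>i<n. ts i < ts (Suc i)) \<longrightarrow>
        prob_space.indep_vars M (\<lambda>_. borel) (\<lambda>i \<omega>. B (ts (Suc i)) \<omega> - B (ts i) \<omega>) {..<n})"

text \<open>Almost false families of events, indexed by parameters z in Z and eps > 0.
  Events need not be known measurable: we bound their outer probability.\<close>
definition almost_false :: "'a measure \<Rightarrow> 'z set \<Rightarrow> ('z \<Rightarrow> real \<Rightarrow> 'a set) \<Rightarrow> bool" where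
  "almost_false M Z A \<longleftrightarrow>
     (\<forall>p>0. \<exists>Cp \<epsilon>0. \<epsilon>0 > 0 \<and>
        (\<forall>z\<in>Z. \<forall>\<epsilon>. 0 < \<epsilon> \<longrightarrow> \<epsilon> \<le> \<epsilon>0 \<longrightarrow>
           (\<exists>E\<in>sets M. A z \<epsilon> \<inter> space M \<subseteq> E \<and> measure M E \<le> Cp * \<epsilon> powr p)))"

definition almost_implies :: "'a measure \<Rightarrow> 'z set \<Rightarrow> ('z \<Rightarrow> real \<Rightarrow> 'a set) \<Rightarrow> ('z \<Rightarrow> real \<Rightarrow> 'a set) \<Rightarrow> bool" where
  "almost_implies M Z A B \<longleftrightarrow> almost_false M Z (\<lambda>z \<epsilon>. A z \<epsilon> - B z \<epsilon>)"

text \<open>det(M_t)(y) along a path b (b s = B_s(omega)).\<close>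
definition detM :: "(real \<Rightarrow> real) \<Rightarrow> real \<Rightarrow> real \<Rightarrow> real \<Rightarrow> (real \<Rightarrow> real) \<Rightarrow> real" where
  "detM u \<nu> t y b =
     integral {0..t} (\<lambda>r.
       (integral {r..t} (\<lambda>s. deriv u (y + sqrt \<nu> * b s))
        - (1 / t) * integral {0..t} (\<lambda>m. integral {m..t} (\<lambda>s. deriv u (y + sqrt \<nu> * b s)))) ^ 2)"

definition hfun :: "(real \<Rightarrow> real) \<Rightarrow> real \<Rightarrow> real \<Rightarrow> real \<Rightarrow> (real \<Rightarrow> real) \<Rightarrow> real" where
  "hfun u \<nu> t y b =
     Sup ((\<lambda>(s, z, \<tau>). \<bar>deriv (deriv u) (y + sqrt \<nu> * (\<tau> * b s + (1 - \<tau>) * b z))\<bar>)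
            ` ({0..t} \<times> {0..t} \<times> {0..1}))"

definition sup_du :: "(real \<Rightarrow> real) \<Rightarrow> real \<Rightarrow> real \<Rightarrow> real \<Rightarrow> (real \<Rightarrow> real) \<Rightarrow> real" where
  "sup_du u \<nu> t y b = Sup ((\<lambda>s. \<bar>deriv u (y + sqrt \<nu> * b s)\<bar>) ` {0..t})"

end

theory Submission
  imports Defs
begin

(* Off an event of probability O(\<epsilon>^p), every Brownian increment over a level-n dyadic
   subinterval of [0,t] is at most \<epsilon>^(-\<alpha>/6) sqrt t 2^(-\<alpha> n) (Gaussian moments of order 2k and
   a union bound), and chaining turns this into an oscillation bound for B on each level-n
   interval; through h it bounds the oscillation of g s = u'(y + sqrt \<nu> B_s).
   If c = |g s0| > 0, take the coarsest level at which this oscillation bound is at most c/2.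
   On the level-n interval of length L = t 2^(-n) around s0, g keeps the sign of g s0 with
   |g| \<ge> c/2, so r \<mapsto> \<integral>_r^t g drops by cL/4 across it and det(M_t) \<ge> c^2 L^3 / 256.
   Against det(M_t) \<le> \<epsilon> v t^\<gamma> \<nu>^\<beta> this gives the first term of the maximum when n = 0;
   otherwise eliminating n between this inequality and the failure at level n - 1 gives the
   second term. *)

lemma smooth_periodic_has_deriv_deriv:
  assumes "smooth_periodic u"
  shows "(deriv u has_real_derivative deriv (deriv u) x) (at x)"
  using assms by (auto simp: smooth_periodic_def DERIV_deriv_iff_real_differentiable dest: spec[of _ 1])

lemma continuous_on_deriv_smooth_periodic:
  assumes "smooth_periodic u"
  shows "continuous_on UNIV (deriv u)" and "continuous_on UNIV (deriv (deriv u))"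
proof -
  have "(deriv ^^ n) u differentiable (at x)" for n x
    using assms unfolding smooth_periodic_def by blast
  from this[of 1] this[of 2] show "continuous_on UNIV (deriv u)" "continuous_on UNIV (deriv (deriv u))"
    by (auto simp: numeral_2_eq_2 intro!: continuous_at_imp_continuous_on differentiable_imp_continuous_within)
qed

lemma abs_diff_le_of_deriv_bound:
  fixes f f' :: "real \<Rightarrow> real"
  assumes deriv: "\<And>x. (f has_real_derivative f' x) (at x)"
    and bound: "\<And>\<tau>. \<tau> \<in> {0..1} \<Longrightarrow> \<bar>f' (\<tau> * p + (1 - \<tau>) * q)\<bar> \<le> H"
  shows "\<bar>f p - f q\<bar> \<le> H * \<bar>p - q\<bar>"
proof -
  have between: "\<bar>f' x\<bar> \<le> H" if "min p q < x" "x < max p q" for x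
  proof -
    define \<tau> where "\<tau> = (x - q) / (p - q)"
    have "p \<noteq> q" using that by auto
    then have "\<tau> * (p - q) = x - q" by (simp add: \<tau>_def)
    then have "x = \<tau> * p + (1 - \<tau>) * q" by (simp add: algebra_simps)
    moreover have "\<tau> \<in> {0..1}"
      using that \<open>p \<noteq> q\<close> by (cases "p < q") (auto simp: \<tau>_def field_split_simps)
    ultimately show ?thesis using bound by simp
  qed
  have ordered: "\<bar>f b - f a\<bar> \<le> H * (b - a)" if "a < b" "min p q = a" "max p q = b" for a b
  proof -
    obtain x where x: "a < x" "x < b" "f b - f a = (b - a) * f' x"
      using MVT2[OF \<open>a < b\<close> deriv] by blast
    then show ?thesis
      using between[of x] \<open>a < b\<close> that by (simp add: abs_mult mult.commute mult_left_mono)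
  qed
  show ?thesis
    using ordered[of p q] ordered[of q p] by (cases p q rule: linorder_cases) (auto simp: abs_minus_commute)
qed

lemma bdd_above_hfun_image:
  fixes b :: "real \<Rightarrow> real"
  assumes u: "smooth_periodic u" and b: "continuous_on {0..t} b"
  shows "bdd_above ((\<lambda>(s, z, \<tau>). \<bar>deriv (deriv u) (y + sqrt \<nu> * (\<tau> * b s + (1 - \<tau>) * b z))\<bar>)
            ` ({0..t} \<times> {0..t} \<times> {0..1}))" (is "bdd_above (?f ` ?S)")
proof -
  have "continuous_on ?S (\<lambda>x. b (fst x))" "continuous_on ?S (\<lambda>x. b (fst (snd x)))"
    by (rule continuous_on_compose2[OF b]; auto intro!: continuous_intros)+
  then have "continuous_on ?S ?f"
    unfolding case_prod_beta
    by (intro continuous_intros continuous_on_compose2[OF continuous_on_deriv_smooth_periodic(2)[OF u]]) auto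
  moreover have "compact ?S" by (intro compact_Times) auto
  ultimately have "compact (?f ` ?S)" by (rule compact_continuous_image)
  then show ?thesis by (intro bounded_imp_bdd_above compact_imp_bounded)
qed

lemma abs_deriv2_le_hfun:
  assumes "smooth_periodic u" and "continuous_on {0..t} b"
    and "s \<in> {0..t}" "z \<in> {0..t}" "\<tau> \<in> {0..1}"
  shows "\<bar>deriv (deriv u) (y + sqrt \<nu> * (\<tau> * b s + (1 - \<tau>) * b z))\<bar> \<le> hfun u \<nu> t y b"
  unfolding hfun_def by (rule cSup_upper[OF _ bdd_above_hfun_image[OF assms(1,2)]]) (use assms in force)

lemma hfun_nonneg:
  assumes "smooth_periodic u" and "0 \<le> t" and "continuous_on {0..t} b"
  shows "0 \<le> hfun u \<nu> t y b"
  using abs_deriv2_le_hfun[OF assms(1,3), of 0 0 0] assms(2) by (meson abs_ge_zero atLeastAtMost_iff order.trans order.refl zero_le_one)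

lemma deriv_along_path_lipschitz:
  assumes u: "smooth_periodic u" and b: "continuous_on {0..t} b" and "0 \<le> \<nu>"
    and s: "s \<in> {0..t}" and z: "z \<in> {0..t}"
  shows "\<bar>deriv u (y + sqrt \<nu> * b s) - deriv u (y + sqrt \<nu> * b z)\<bar> \<le> hfun u \<nu> t y b * sqrt \<nu> * \<bar>b s - b z\<bar>"
proof -
  have "\<bar>deriv u (y + sqrt \<nu> * b s) - deriv u (y + sqrt \<nu> * b z)\<bar>
      \<le> hfun u \<nu> t y b * \<bar>(y + sqrt \<nu> * b s) - (y + sqrt \<nu> * b z)\<bar>"
  proof (rule abs_diff_le_of_deriv_bound[OF smooth_periodic_has_deriv_deriv[OF u]])
    fix \<tau> :: real assume "\<tau> \<in> {0..1}"
    have "\<tau> * (y + sqrt \<nu> * b s) + (1 - \<tau>) * (y + sqrt \<nu> * b z) = y + sqrt \<nu> * (\<tau> * b s + (1 - \<tau>) * b z)"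
      by (simp add: algebra_simps)
    then show "\<bar>deriv (deriv u) (\<tau> * (y + sqrt \<nu> * b s) + (1 - \<tau>) * (y + sqrt \<nu> * b z))\<bar> \<le> hfun u \<nu> t y b"
      using abs_deriv2_le_hfun[OF u b s z \<open>\<tau> \<in> {0..1}\<close>] by simp
  qed
  also have "\<dots> = hfun u \<nu> t y b * sqrt \<nu> * \<bar>b s - b z\<bar>"
    using \<open>0 \<le> \<nu>\<close> by (simp add: abs_mult right_diff_distrib[symmetric])
  finally show ?thesis .
qed

definition dyadic_increments_bounded :: "(real \<Rightarrow> real) \<Rightarrow> real \<Rightarrow> (nat \<Rightarrow> real) \<Rightarrow> bool" where
  "dyadic_increments_bounded b t w \<longleftrightarrow>
     (\<forall>n j. j < 2^n \<longrightarrow> \<bar>b (real (Suc j) * t / 2^n) - b (real j * t / 2^n)\<bar> \<le> w n)"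

lemma dyadic_point_le:
  fixes t :: real assumes "0 \<le> t" and "j \<le> 2^n"
  shows "real j * t / 2^n \<le> t"
proof -
  have "real j \<le> 2^n" using assms(2) by (metis of_nat_le_iff of_nat_numeral of_nat_power)
  then show ?thesis using assms(1) by (simp add: field_simps mult_left_mono)
qed

lemma exists_dyadic_interval:
  fixes t s :: real
  assumes "0 < t" and "0 \<le> s" "s \<le> t"
  shows "\<exists>j<(2::nat)^n. real j * t / 2^n \<le> s \<and> s \<le> real (Suc j) * t / 2^n"
proof (cases "s = t")
  case True
  obtain j where j: "Suc j = 2^n" by (metis Suc_pred zero_less_numeral zero_less_power)
  then have "real (Suc j) = 2^n" by (metis of_nat_numeral of_nat_power)
  then show ?thesis
    using j True dyadic_point_le[of t j n] assms(1) by (intro exI[of _ j]) auto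
next
  case False
  define j where "j = nat \<lfloor>s * 2^n / t\<rfloor>"
  have "0 \<le> s * 2^n / t" using assms by simp
  then have j: "real j \<le> s * 2^n / t" "s * 2^n / t < real j + 1"
    unfolding j_def by linarith+
  have "s * 2^n / t < 2^n" using assms False by (simp add: field_simps)
  then have "real j < 2^n" using j by linarith
  then have "j < 2^n" by (metis of_nat_less_iff of_nat_numeral of_nat_power)
  then show ?thesis using j assms(1) by (intro exI[of _ j]) (simp add: field_simps)
qed

lemma dyadic_floor_tendsto:
  fixes s t :: real
  assumes "0 < t" and "0 \<le> s"
  shows "(\<lambda>m. real (nat \<lfloor>s * 2^m / t\<rfloor>) * t / 2^m) \<longlonglongrightarrow> s"
proof (rule real_tendsto_sandwich)
  have fl: "real (nat \<lfloor>s * 2^m / t\<rfloor>) \<le> s * 2^m / t" "s * 2^m / t < real (nat \<lfloor>s * 2^m / t\<rfloor>) + 1" for m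
  proof -
    have "0 \<le> s * 2^m / t" using assms by simp
    then show "real (nat \<lfloor>s * 2^m / t\<rfloor>) \<le> s * 2^m / t" "s * 2^m / t < real (nat \<lfloor>s * 2^m / t\<rfloor>) + 1"
      by linarith+
  qed
  show "\<forall>\<^sub>F m in sequentially. s - t / 2^m \<le> real (nat \<lfloor>s * 2^m / t\<rfloor>) * t / 2^m"
  proof (intro always_eventually allI)
    fix m
    have "s - real (nat \<lfloor>s * 2^m / t\<rfloor>) * t / 2^m = (s * 2^m / t - real (nat \<lfloor>s * 2^m / t\<rfloor>)) * (t / 2^m)"
      using assms(1) by (simp add: field_simps)
    also have "\<dots> \<le> 1 * (t / 2^m)"
      using fl[of m] assms(1) by (intro mult_right_mono) (linarith, simp)
    finally show "s - t / 2^m \<le> real (nat \<lfloor>s * 2^m / t\<rfloor>) * t / 2^m" by simp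
  qed
  show "\<forall>\<^sub>F m in sequentially. real (nat \<lfloor>s * 2^m / t\<rfloor>) * t / 2^m \<le> s"
    using fl(1) assms(1) by (intro always_eventually allI) (simp add: field_simps)
  have "(\<lambda>m. s - t * (1/2)^m) \<longlonglongrightarrow> s - t * 0"
    by (intro tendsto_intros LIMSEQ_power_zero) auto
  then show "(\<lambda>m. s - t / 2^m) \<longlonglongrightarrow> s" by (simp add: power_one_over)
qed (rule tendsto_const)

(* W n bounds the distance from the left end of a level-n interval to any finer dyadic point
   in it: one level-(n+1) step, then recursion in the half containing the point. *)
lemma dyadic_chain_le:
  assumes incr: "dyadic_increments_bounded b t w"
    and wW: "\<And>n. w n \<le> W n" and rec: "\<And>n. w (Suc n) + W (Suc n) \<le> W n"
    and "j < 2^n" "j * 2^d \<le> i" "i \<le> Suc j * 2^d"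
  shows "\<bar>b (real i * t / 2^(n+d)) - b (real j * t / 2^n)\<bar> \<le> W n"
  using assms(4-)
proof (induction d arbitrary: n j)
  case 0
  have "\<bar>b (real (Suc j) * t / 2^n) - b (real j * t / 2^n)\<bar> \<le> w n"
    using incr \<open>j < 2^n\<close> unfolding dyadic_increments_bounded_def by blast
  moreover have "i = j \<or> i = Suc j" using 0 by auto
  ultimately show ?case using wW[of n] by auto
next
  case (Suc d)
  have w0: "0 \<le> w (Suc n)"
    using incr unfolding dyadic_increments_bounded_def by (meson abs_ge_zero order_trans zero_less_numeral zero_less_power)
  have even: "real (2*j) * t / 2^(Suc n) = real j * t / 2^n" by (simp add: field_simps)
  have level: "real i * t / 2^(n + Suc d) = real i * t / 2^(Suc n + d)" by simp
  show ?case
  proof (cases "i \<le> Suc (2*j) * 2^d")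
    case True
    have "2*j < 2^Suc n" "2*j * 2^d \<le> i" using Suc.prems by (simp_all add: mult.assoc)
    from Suc.IH[OF this True] show ?thesis
      using even level rec[of n] w0 by simp
  next
    case False
    have odd: "Suc (2*j) < 2^Suc n" "i \<le> Suc (Suc (2*j)) * 2^d" using Suc.prems by (simp_all add: mult.assoc)
    from Suc.IH[OF odd(1) _ odd(2)] False
    have "\<bar>b (real i * t / 2^(Suc n + d)) - b (real (Suc (2*j)) * t / 2^Suc n)\<bar> \<le> W (Suc n)" by simp
    moreover have "\<bar>b (real (Suc (2*j)) * t / 2^Suc n) - b (real (2*j) * t / 2^Suc n)\<bar> \<le> w (Suc n)"
      using incr[unfolded dyadic_increments_bounded_def, rule_format, of "2*j" "Suc n"] odd(1) by simp
    ultimately show ?thesis using rec[of n] unfolding level even[symmetric] by linarith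
  qed
qed

lemma continuous_dyadic_chain_le:
  assumes "0 < t" and cont: "continuous_on {0..t} b" and incr: "dyadic_increments_bounded b t w"
    and wW: "\<And>n. w n \<le> W n" and rec: "\<And>n. w (Suc n) + W (Suc n) \<le> W n"
    and j: "j < 2^n" and s: "real j * t / 2^n \<le> s" "s \<le> real (Suc j) * t / 2^n"
  shows "\<bar>b s - b (real j * t / 2^n)\<bar> \<le> W n"
proof -
  define i where "i d = nat \<lfloor>s * 2^(n+d) / t\<rfloor>" for d
  define x where "x d = real (i d) * t / 2^(n+d)" for d
  have s0: "0 \<le> s" "s \<le> t"
    using s dyadic_point_le[of t "Suc j" n] j \<open>0 < t\<close> by (auto intro: order_trans[rotated])
  have "x \<longlonglongrightarrow> s"
    using LIMSEQ_ignore_initial_segment[OF dyadic_floor_tendsto[OF \<open>0 < t\<close> s0(1)], of n]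
    unfolding x_def i_def by (simp add: add.commute)
  moreover have "x d \<in> {0..t}" for d
  proof -
    have "0 \<le> s * 2^(n+d) / t" using s0 \<open>0 < t\<close> by simp
    then have "real (i d) \<le> s * 2^(n+d) / t" unfolding i_def by linarith
    then have "x d \<le> s" using \<open>0 < t\<close> unfolding x_def by (simp add: field_simps)
    then show ?thesis using s0 \<open>0 < t\<close> unfolding x_def by simp
  qed
  ultimately have "(\<lambda>d. b (x d)) \<longlonglongrightarrow> b s"
    using s0 by (intro continuous_on_tendsto_compose[OF cont]) auto
  then have "(\<lambda>d. \<bar>b (x d) - b (real j * t / 2^n)\<bar>) \<longlonglongrightarrow> \<bar>b s - b (real j * t / 2^n)\<bar>"
    by (intro tendsto_intros)
  moreover have "\<bar>b (x d) - b (real j * t / 2^n)\<bar> \<le> W n" for d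
  proof -
    have scale: "real k * t / 2^n * 2^(n+d) / t = real (k * 2^d)" for k
      using \<open>0 < t\<close> by (simp add: power_add field_simps)
    have "real j * t / 2^n * 2^(n+d) / t \<le> s * 2^(n+d) / t" "s * 2^(n+d) / t \<le> real (Suc j) * t / 2^n * 2^(n+d) / t"
      using s \<open>0 < t\<close> by (intro divide_right_mono mult_right_mono; simp)+
    then have "real (j * 2^d) \<le> s * 2^(n+d) / t" "s * 2^(n+d) / t \<le> real (Suc j * 2^d)"
      unfolding scale by simp_all
    then have "int (j * 2^d) \<le> \<lfloor>s * 2^(n+d) / t\<rfloor>" "\<lfloor>s * 2^(n+d) / t\<rfloor> \<le> int (Suc j * 2^d)"
      by (simp_all only: le_floor_iff floor_le_iff of_int_of_nat_eq)
    then have "j * 2^d \<le> i d" "i d \<le> Suc j * 2^d"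
      unfolding i_def by linarith+
    then show ?thesis unfolding x_def using dyadic_chain_le[OF incr wW rec j] by blast
  qed
  ultimately show ?thesis by (intro LIMSEQ_le_const2[of _ _ "W n"]) auto
qed

lemma dyadic_oscillation_le:
  assumes "0 < t" and cont: "continuous_on {0..t} b"
    and incr: "dyadic_increments_bounded b t (\<lambda>n. \<Lambda> * r^n)" and "0 \<le> \<Lambda>" "0 < r" "r < 1"
    and j: "j < 2^n"
    and s: "s \<in> {real j * t / 2^n .. real (Suc j) * t / 2^n}"
    and s': "s' \<in> {real j * t / 2^n .. real (Suc j) * t / 2^n}"
  shows "\<bar>b s - b s'\<bar> \<le> 2 * (\<Lambda> * r^n / (1 - r))"
proof -
  define W where "W n = \<Lambda> * r^n / (1 - r)" for n
  have wW: "\<Lambda> * r^n \<le> W n" for n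
    using \<open>0 \<le> \<Lambda>\<close> \<open>0 < r\<close> \<open>r < 1\<close> unfolding W_def by (simp add: field_simps mult_left_le)
  have rec: "\<Lambda> * r^Suc n + W (Suc n) \<le> W n" for n
  proof -
    have "\<Lambda> * r^Suc n + W (Suc n) = \<Lambda> * r^n * (r * (2 - r)) / (1 - r)"
      using \<open>r < 1\<close> unfolding W_def by (simp add: field_simps)
    also have "\<dots> \<le> \<Lambda> * r^n / (1 - r)"
      using \<open>0 \<le> \<Lambda>\<close> \<open>0 < r\<close> \<open>r < 1\<close> zero_le_power2[of "1 - r"]
      by (intro divide_right_mono mult_left_le) (auto simp: power2_eq_square algebra_simps)
    finally show ?thesis unfolding W_def .
  qed
  have "\<bar>b s - b (real j * t / 2^n)\<bar> \<le> W n" "\<bar>b s' - b (real j * t / 2^n)\<bar> \<le> W n"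
    using s s' by (auto intro!: continuous_dyadic_chain_le[OF \<open>0 < t\<close> cont incr wW rec j])
  then show ?thesis unfolding W_def by linarith
qed

lemma integral_sq_ge_on_subinterval:
  fixes F :: "real \<Rightarrow> real"
  assumes F: "continuous_on {0..t} F" and "0 \<le> x" "x + l \<le> t" "0 \<le> l" "0 \<le> c"
    and big: "\<And>r. r \<in> {x..x+l} \<Longrightarrow> c \<le> \<bar>F r - m\<bar>"
  shows "c^2 * l \<le> integral {0..t} (\<lambda>r. (F r - m)^2)"
proof -
  have int: "(\<lambda>r. (F r - m)^2) integrable_on {a..b}" if "0 \<le> a" "b \<le> t" for a b
    using that by (intro integrable_continuous_real continuous_on_subset[OF F] continuous_intros) auto
  have "c^2 * l = integral {x..x+l} (\<lambda>r. c^2)" using \<open>0 \<le> l\<close> by simp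
  also have "\<dots> \<le> integral {x..x+l} (\<lambda>r. (F r - m)^2)"
  proof (rule integral_le[OF integrable_const_ivl int])
    fix r assume "r \<in> {x..x+l}"
    then show "c^2 \<le> (F r - m)^2"
      using big \<open>0 \<le> c\<close> by (metis abs_of_nonneg power2_abs power_mono)
  qed (use assms in auto)
  also have "\<dots> \<le> integral {0..t} (\<lambda>r. (F r - m)^2)"
    using assms by (intro integral_subset_le int) auto
  finally show ?thesis .
qed

(* r \<mapsto> \<integral>_r^t g drops by at least aL/2 from the first to the last quarter of [p, p+L],
   so it stays aL/4 away from m on one of these two quarters. *)
lemma tail_integral_deviation_ge_pos:
  fixes g :: "real \<Rightarrow> real"
  assumes g: "continuous_on {0..t} g" and "0 \<le> p" "p + L \<le> t" "0 < L" "0 \<le> a"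
    and pos: "\<And>s. s \<in> {p..p+L} \<Longrightarrow> a \<le> g s"
  shows "a^2 * L^3 / 64 \<le> integral {0..t} (\<lambda>r. (integral {r..t} g - m)^2)"
proof -
  define F where "F r = integral {r..t} g" for r
  have gi: "g integrable_on {x..y}" if "0 \<le> x" "y \<le> t" for x y
    using that by (intro integrable_continuous_real continuous_on_subset[OF g]) auto
  have F: "continuous_on {0..t} F"
    unfolding F_def by (rule indefinite_integral_continuous_1'[OF gi]) auto
  have drop: "a * L / 2 \<le> F r1 - F r4" if r1: "r1 \<in> {p..p+L/4}" and r4: "r4 \<in> {p+3*L/4..p+L}" for r1 r4
  proof -
    have "L / 2 \<le> r4 - r1" using r1 r4 by auto
    then have "a * (L / 2) \<le> a * (r4 - r1)" using \<open>0 \<le> a\<close> by (rule mult_left_mono)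
    also have "\<dots> = integral {r1..r4} (\<lambda>s. a)" using r1 r4 by simp
    also have "\<dots> \<le> integral {r1..r4} g"
      using r1 r4 assms gi by (intro integral_le pos) auto
    also have "\<dots> = F r1 - F r4"
      using r1 r4 assms Henstock_Kurzweil_Integration.integral_combine[of r1 r4 t g] gi
      unfolding F_def by (auto simp: algebra_simps)
    finally show ?thesis by simp
  qed
  have quarter: "(a * L / 4)^2 * (L / 4) \<le> integral {0..t} (\<lambda>r. (F r - m)^2)"
  proof (cases "\<forall>r\<in>{p..p+L/4}. a * L / 4 \<le> \<bar>F r - m\<bar>")
    case True
    then show ?thesis using assms by (intro integral_sq_ge_on_subinterval[OF F, of p]) auto
  next
    case False
    then obtain r1 where r1: "r1 \<in> {p..p+L/4}" "\<bar>F r1 - m\<bar> < a * L / 4" by (auto simp: not_le)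
    have "a * L / 4 \<le> \<bar>F r - m\<bar>" if "r \<in> {p+3*L/4..p+3*L/4+L/4}" for r
    proof -
      have "a * L / 2 \<le> F r1 - F r" using drop[OF r1(1), of r] that by auto
      then show ?thesis using r1(2) by linarith
    qed
    then show ?thesis using assms by (intro integral_sq_ge_on_subinterval[OF F, of "p + 3*L/4"]) auto
  qed
  then show ?thesis unfolding F_def by (simp add: power2_eq_square power3_eq_cube field_simps)
qed

lemma tail_integral_deviation_ge_of_near_constant:
  fixes g :: "real \<Rightarrow> real"
  assumes g: "continuous_on {0..t} g" and "0 \<le> p" "p + L \<le> t" "0 < L" and s0: "s0 \<in> {p..p+L}"
    and near: "\<And>s. s \<in> {p..p+L} \<Longrightarrow> \<bar>g s - g s0\<bar> \<le> \<bar>g s0\<bar> / 2"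
  shows "\<bar>g s0\<bar>^2 * L^3 / 256 \<le> integral {0..t} (\<lambda>r. (integral {r..t} g - m)^2)"
proof -
  have "(\<bar>g s0\<bar> / 2)^2 * L^3 / 64 \<le> integral {0..t} (\<lambda>r. (integral {r..t} g - m)^2)"
  proof (cases "0 \<le> g s0")
    case True
    have "\<bar>g s0\<bar> / 2 \<le> g s" if "s \<in> {p..p+L}" for s
      using near[OF that] True by linarith
    then show ?thesis using assms by (intro tail_integral_deviation_ge_pos[OF g]) auto
  next
    case False
    have "\<bar>g s0\<bar> / 2 \<le> - g s" if "s \<in> {p..p+L}" for s
      using near[OF that] False by linarith
    then have "(\<bar>g s0\<bar> / 2)^2 * L^3 / 64 \<le> integral {0..t} (\<lambda>r. (integral {r..t} (\<lambda>s. - g s) - - m)^2)"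
      using assms by (intro tail_integral_deviation_ge_pos continuous_intros g) auto
    also have "\<dots> = integral {0..t} (\<lambda>r. (integral {r..t} g - m)^2)"
      by (simp add: integral_neg power2_commute)
    finally show ?thesis .
  qed
  then show ?thesis by (simp add: power2_eq_square)
qed

lemma normal_tail_le_even_moment:
  fixes X :: "'a \<Rightarrow> real"
  assumes "prob_space M" and X: "distributed M lborel X (\<lambda>x. ennreal (normal_density 0 \<sigma> x))"
    and "0 < \<sigma>" "0 < l"
  shows "measure M {\<omega>\<in>space M. l \<le> \<bar>X \<omega>\<bar>} \<le> fact (2*k) / ((2 / \<sigma>\<^sup>2)^k * fact k) / l^(2*k)"
proof -
  interpret prob_space M by fact
  have [measurable]: "X \<in> borel_measurable M" using distributed_measurable[OF X] by simp
  have moment: "has_bochner_integral lborel (\<lambda>x. normal_density 0 \<sigma> x * x ^ (2*k)) (fact (2*k) / ((2 / \<sigma>\<^sup>2)^k * fact k))"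
    using normal_moment_even[OF \<open>0 < \<sigma>\<close>, of 0 k] by simp
  have nonneg: "\<And>x. 0 \<le> normal_density 0 \<sigma> x" by (simp add: normal_density_nonneg)
  have int: "integrable M (\<lambda>\<omega>. X \<omega> ^ (2*k))"
    using distributed_integrable[OF X, of "\<lambda>x. x^(2*k)"] integrable.intros[OF moment] nonneg by simp
  have "{\<omega>\<in>space M. l \<le> \<bar>X \<omega>\<bar>} \<subseteq> {\<omega>\<in>space M. l^(2*k) \<le> X \<omega> ^ (2*k)}"
  proof safe
    fix \<omega> assume "l \<le> \<bar>X \<omega>\<bar>"
    then have "l^(2*k) \<le> \<bar>X \<omega>\<bar>^(2*k)" using \<open>0 < l\<close> by (intro power_mono) auto
    then show "l^(2*k) \<le> X \<omega> ^ (2*k)" by (simp add: power_even_abs)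
  qed
  then have "measure M {\<omega>\<in>space M. l \<le> \<bar>X \<omega>\<bar>} \<le> measure M {\<omega>\<in>space M. l^(2*k) \<le> X \<omega> ^ (2*k)}"
    by (intro finite_measure_mono) measurable
  also have "\<dots> \<le> (\<integral>\<omega>. X \<omega> ^ (2*k) \<partial>M) / l^(2*k)"
    using \<open>0 < l\<close> by (intro integral_Markov_inequality_measure[OF int]) (auto simp: zero_le_even_power)
  also have "(\<integral>\<omega>. X \<omega> ^ (2*k) \<partial>M) = fact (2*k) / ((2 / \<sigma>\<^sup>2)^k * fact k)"
    using distributed_integral[OF X, of "\<lambda>x. x^(2*k)"] moment nonneg has_bochner_integral_integral_eq by fastforce
  finally show ?thesis .
qed

lemma brownian_increment_tail_le:
  assumes BM: "std_brownian_motion M B" and "0 \<le> s" "s < s'" "0 < l"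
  shows "measure M {\<omega>\<in>space M. l \<le> \<bar>B s' \<omega> - B s \<omega>\<bar>} \<le> fact (2*k) / (2^k * fact k) * (s' - s)^k / l^(2*k)"
proof -
  have "prob_space M" and "distributed M lborel (\<lambda>\<omega>. B s' \<omega> - B s \<omega>) (\<lambda>x. ennreal (normal_density 0 (sqrt (s' - s)) x))"
    using BM assms(2,3) unfolding std_brownian_motion_def by auto
  then have "measure M {\<omega>\<in>space M. l \<le> \<bar>B s' \<omega> - B s \<omega>\<bar>} \<le> fact (2*k) / ((2 / (sqrt (s'-s))\<^sup>2)^k * fact k) / l^(2*k)"
    using assms by (intro normal_tail_le_even_moment) auto
  also have "(sqrt (s'-s))\<^sup>2 = s' - s" using assms by simp
  finally show ?thesis using assms by (simp add: power_divide field_simps)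
qed
lemma dyadic_tail_term_le:
  fixes t \<epsilon> \<kappa> \<alpha> p :: real and k n :: nat
  assumes "0 < t" "0 < \<epsilon>" "\<epsilon> \<le> 1" and k: "2 \<le> real k * (1 - 2*\<alpha>)" "p \<le> 2 * \<kappa> * real k"
  shows "2^n * (t/2^n)^k / (\<epsilon> powr (-\<kappa>) * sqrt t * (2 powr (-\<alpha>))^n)^(2*k) \<le> \<epsilon> powr p * (1/2)^n"
proof -
  have denom: "(\<epsilon> powr (-\<kappa>) * sqrt t * (2 powr (-\<alpha>))^n)^(2*k) = \<epsilon> powr (-2*\<kappa>*k) * t^k * 2 powr (-2*\<alpha>*n*k)"
  proof -
    have "(\<epsilon> powr (-\<kappa>))^(2*k) = \<epsilon> powr (-2*\<kappa>*k)" using assms by (simp add: powr_realpow[symmetric] powr_powr mult_ac)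
    moreover have "(sqrt t)^(2*k) = t^k" using assms by (simp add: power_mult)
    moreover have "((2 powr (-\<alpha>))^n)^(2*k) = 2 powr (-2*\<alpha>*n*k)"
      by (simp add: powr_realpow[symmetric] powr_powr power_mult[symmetric] mult_ac)
    ultimately show ?thesis by (simp add: power_mult_distrib)
  qed
  have numer: "2^n * (t/2^n)^k = t^k * 2 powr (real n - real n * real k)"
    by (simp add: power_divide powr_diff powr_realpow[symmetric] powr_powr mult_ac)
  have "2^n * (t/2^n)^k / (\<epsilon> powr (-\<kappa>) * sqrt t * (2 powr (-\<alpha>))^n)^(2*k)
      = \<epsilon> powr (2*\<kappa>*k) * 2 powr (real n * (1 - real k * (1 - 2*\<alpha>)))"
    unfolding denom numer using assms
    by (simp add: powr_add powr_minus field_simps) (simp add: powr_add[symmetric] algebra_simps)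
  also have "\<dots> \<le> \<epsilon> powr p * 2 powr (- real n)"
  proof (rule mult_mono)
    show "\<epsilon> powr (2*\<kappa>*k) \<le> \<epsilon> powr p" using assms by (intro powr_mono') auto
    have "real n * (1 - real k * (1 - 2*\<alpha>)) \<le> real n * (-1)" using k by (intro mult_left_mono) auto
    then show "2 powr (real n * (1 - real k * (1 - 2*\<alpha>))) \<le> 2 powr (- real n)" by simp
  qed auto
  also have "2 powr (- real n) = (1/2)^n" by (simp add: powr_minus powr_realpow power_one_over inverse_eq_divide)
  finally show ?thesis .
qed

lemma dyadic_increments_unbounded_eq:
  "{\<omega>\<in>space M. \<not> dyadic_increments_bounded (\<lambda>s. B s \<omega>) t w} =
     (\<Union>n. \<Union>j\<in>{..<(2::nat)^n}. {\<omega>\<in>space M. w n < \<bar>B (real (Suc j) * t / 2^n) \<omega> - B (real j * t / 2^n) \<omega>\<bar>})"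
  unfolding dyadic_increments_bounded_def by (auto simp: not_le)

lemma brownian_dyadic_increments_unbounded_sets:
  assumes BM: "std_brownian_motion M B" and "0 < t"
  shows "{\<omega>\<in>space M. \<not> dyadic_increments_bounded (\<lambda>s. B s \<omega>) t w} \<in> sets M"
proof -
  have [measurable]: "B (real j * t / 2^n) \<in> borel_measurable M" for j n
    using BM \<open>0 < t\<close> unfolding std_brownian_motion_def by simp
  show ?thesis unfolding dyadic_increments_unbounded_eq by measurable
qed

lemma brownian_dyadic_level_unbounded_prob:
  fixes t \<epsilon> \<kappa> \<alpha> p :: real and k n :: nat
  assumes BM: "std_brownian_motion M B" and "0 < t" "0 < \<epsilon>" "\<epsilon> \<le> 1"
    and k: "2 \<le> real k * (1 - 2*\<alpha>)" "p \<le> 2 * \<kappa> * real k"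
  shows "measure M (\<Union>j<(2::nat)^n. {\<omega>\<in>space M. \<epsilon> powr (-\<kappa>) * sqrt t * (2 powr (-\<alpha>))^n
      < \<bar>B (real (Suc j) * t / 2^n) \<omega> - B (real j * t / 2^n) \<omega>\<bar>})
    \<le> fact (2*k) / (2^k * fact k) * \<epsilon> powr p * (1/2)^n"
proof -
  interpret prob_space M using BM unfolding std_brownian_motion_def by auto
  define w where "w = \<epsilon> powr (-\<kappa>) * sqrt t * (2 powr (-\<alpha>))^n"
  define c :: real where "c = fact (2*k) / (2^k * fact k)"
  define E where "E j = {\<omega>\<in>space M. w < \<bar>B (real (Suc j) * t / 2^n) \<omega> - B (real j * t / 2^n) \<omega>\<bar>}" for j
  define E' where "E' j = {\<omega>\<in>space M. w \<le> \<bar>B (real (Suc j) * t / 2^n) \<omega> - B (real j * t / 2^n) \<omega>\<bar>}" for j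
  have [measurable]: "B (real j * t / 2^n) \<in> borel_measurable M" for j
    using BM \<open>0 < t\<close> unfolding std_brownian_motion_def by simp
  have E_sets: "E j \<in> sets M" and E'_sets: "E' j \<in> sets M" for j
    unfolding E_def E'_def by measurable
  have "measure M (E j) \<le> c * (t/2^n)^k / w^(2*k)" for j
  proof -
    have "measure M (E j) \<le> measure M (E' j)"
      unfolding E_def E'_def by (intro finite_measure_mono E'_sets[unfolded E'_def]) auto
    also have "\<dots> \<le> c * (real (Suc j) * t / 2^n - real j * t / 2^n)^k / w^(2*k)"
      unfolding E'_def c_def w_def using \<open>0 < t\<close> \<open>0 < \<epsilon>\<close>
      by (intro brownian_increment_tail_le[OF BM]) (auto simp: field_simps)
    also have "real (Suc j) * t / 2^n - real j * t / 2^n = t / 2^n" by (simp add: field_simps)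
    finally show ?thesis .
  qed
  then have "measure M (\<Union>j<(2::nat)^n. E j) \<le> (\<Sum>j<(2::nat)^n. c * (t/2^n)^k / w^(2*k))"
    by (intro measure_UNION_le[THEN order_trans] sum_mono E_sets) auto
  also have "\<dots> = c * (2^n * (t/2^n)^k / w^(2*k))" by simp
  also have "\<dots> \<le> c * (\<epsilon> powr p * (1/2)^n)"
    unfolding w_def c_def using \<open>0 < t\<close> \<open>0 < \<epsilon>\<close> \<open>\<epsilon> \<le> 1\<close> k
    by (intro mult_left_mono dyadic_tail_term_le) auto
  finally show ?thesis unfolding E_def w_def c_def by simp
qed

lemma brownian_dyadic_increments_unbounded_prob:
  fixes t \<epsilon> \<kappa> \<alpha> p :: real and k :: nat
  assumes BM: "std_brownian_motion M B" and "0 < t" "0 < \<epsilon>" "\<epsilon> \<le> 1"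
    and k: "2 \<le> real k * (1 - 2*\<alpha>)" "p \<le> 2 * \<kappa> * real k"
  shows "measure M {\<omega>\<in>space M. \<not> dyadic_increments_bounded (\<lambda>s. B s \<omega>) t (\<lambda>n. \<epsilon> powr (-\<kappa>) * sqrt t * (2 powr (-\<alpha>))^n)}
    \<le> 2 * (fact (2*k) / (2^k * fact k)) * \<epsilon> powr p"
proof -
  interpret prob_space M using BM unfolding std_brownian_motion_def by auto
  define c :: real where "c = fact (2*k) / (2^k * fact k)"
  define A where "A n = (\<Union>j<(2::nat)^n. {\<omega>\<in>space M. \<epsilon> powr (-\<kappa>) * sqrt t * (2 powr (-\<alpha>))^n
    < \<bar>B (real (Suc j) * t / 2^n) \<omega> - B (real j * t / 2^n) \<omega>\<bar>})" for n
  have [measurable]: "B (real j * t / 2^n) \<in> borel_measurable M" for j n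
    using BM \<open>0 < t\<close> unfolding std_brownian_motion_def by simp
  have A_sets: "A n \<in> sets M" for n unfolding A_def by measurable
  have prob_A: "measure M (A n) \<le> c * \<epsilon> powr p * (1/2)^n" for n
    unfolding A_def c_def by (rule brownian_dyadic_level_unbounded_prob[OF assms])
  have geom: "summable (\<lambda>n. c * \<epsilon> powr p * (1/2::real)^n)" by (intro summable_mult summable_geometric) simp
  have summable_A: "summable (\<lambda>n. measure M (A n))"
    by (rule summable_comparison_test'[OF geom, of 0]) (use prob_A in auto)
  have "measure M (\<Union>n. A n) \<le> (\<Sum>n. measure M (A n))"
    using A_sets summable_A by (intro finite_measure_subadditive_countably) auto
  also have "\<dots> \<le> (\<Sum>n. c * \<epsilon> powr p * (1/2::real)^n)" by (intro suminf_le prob_A summable_A geom)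
  also have "\<dots> = 2 * c * \<epsilon> powr p" by (subst suminf_mult) (auto simp: suminf_geometric)
  finally show ?thesis
    unfolding dyadic_increments_unbounded_eq A_def c_def .
qed

lemma scale_bound_whole_interval:
  fixes c t \<nu> v \<epsilon> \<gamma> \<beta> q :: real
  assumes c: "c > 0" and t: "t > 0" and nu: "\<nu> > 0" and v: "v > 0" and e: "0 < \<epsilon>" "\<epsilon> \<le> 1"
    and q: "0 < q" "q \<le> 1/2"
    and H: "c^2 * t^3 / 256 \<le> \<epsilon> * v * t powr \<gamma> * \<nu> powr \<beta>"
  shows "c \<le> 16 * \<epsilon> powr q * (v powr (1/2) * t powr ((\<gamma> - 3) / 2) * \<nu> powr (\<beta> / 2))"
proof -
  have "ln (c^2 * t^3 / 256) \<le> ln (\<epsilon> * v * t powr \<gamma> * \<nu> powr \<beta>)"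
    using H c t nu v e by (subst ln_le_cancel_iff) auto
  then have H1: "2 * ln c + 3 * ln t - ln 256 \<le> ln \<epsilon> + ln v + \<gamma> * ln t + \<beta> * ln \<nu>"
    using c t nu v e by (simp add: ln_mult ln_div ln_realpow ln_powr)
  have l256: "ln (256::real) = 8 * ln 2" using ln_realpow[of 2 8] by simp
  have l16: "ln (16::real) = 4 * ln 2" using ln_realpow[of 2 4] by simp
  have le0: "ln \<epsilon> \<le> 0" using e by simp
  have qe: "(1/2) * ln \<epsilon> \<le> q * ln \<epsilon>" using le0 q by (intro mult_right_mono_neg) auto
  have "ln c \<le> 4 * ln 2 + q * ln \<epsilon> + ln v / 2 + (\<gamma> * ln t) / 2 - 3 * ln t / 2 + (\<beta> * ln \<nu>) / 2"
    using H1 qe l256 l16 by linarith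
  also have "\<dots> = ln (16 * \<epsilon> powr q * (v powr (1/2) * t powr ((\<gamma> - 3) / 2) * \<nu> powr (\<beta> / 2)))"
    using t nu v e l16 by (simp add: ln_mult ln_powr algebra_simps) (simp add: field_simps)
  finally show ?thesis using c t nu v e by (subst (asm) ln_le_cancel_iff) auto
qed

lemma le_powr_prod_of_ln_le:
  fixes c D \<epsilon> Y p a :: real
  assumes "0 < c" "0 < D" "0 < \<epsilon>" "0 < Y" "0 < p"
    and "p * ln c \<le> ln D + a * ln \<epsilon> + ln Y"
  shows "c \<le> D powr (1/p) * \<epsilon> powr (a/p) * Y powr (1/p)"
proof -
  have "ln c \<le> (1/p) * ln D + (a/p) * ln \<epsilon> + (1/p) * ln Y"
    using assms by (simp add: field_simps)
  also have "\<dots> = ln (D powr (1/p) * \<epsilon> powr (a/p) * Y powr (1/p))"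
    using assms by (simp add: ln_mult ln_powr)
  finally show ?thesis using assms by (subst (asm) ln_le_cancel_iff) auto
qed

lemma scale_bound_critical_level:
  fixes c t \<nu> v \<epsilon> \<gamma> \<beta> \<alpha> h a0 :: real and N :: nat
  assumes c: "c > 0" and t: "t > 0" and nu: "\<nu> > 0" and v: "v > 0" and e: "0 < \<epsilon>" "\<epsilon> \<le> 1"
    and a: "0 < \<alpha>" and h: "h > 0" and a0: "0 < a0"
    and H1: "c^2 * (t / 2^(Suc N))^3 / 256 \<le> \<epsilon> * v * t powr \<gamma> * \<nu> powr \<beta>"
    and H2: "c / 2 < 2 * h * sqrt \<nu> * ((\<epsilon> powr (-(\<alpha>/6)) * sqrt t) * (2 powr (-\<alpha>))^N / a0)"
  shows "c \<le> (512 * 2048 powr \<alpha> / a0^3) powr (1 / (3 + 2*\<alpha>)) * \<epsilon> powr (\<alpha> / (2 * (3 + 2*\<alpha>))) *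
     (v powr \<alpha> * t powr (\<alpha> * (\<gamma> - 3)) * \<nu> powr (\<alpha> * \<beta>) * h ^ 3 * \<nu> powr (3/2) * t powr (3/2)) powr (1 / (3 + 2 * \<alpha>))"
proof -
  define D where "D = 512 * 2048 powr \<alpha> / a0^3"
  define Y where "Y = v powr \<alpha> * t powr (\<alpha> * (\<gamma> - 3)) * \<nu> powr (\<alpha> * \<beta>) * h ^ 3 * \<nu> powr (3/2) * t powr (3/2)"
  have ln_pow2: "ln (2^k :: real) = k * ln 2" for k :: nat by (simp add: ln_realpow)
  have "ln (c^2 * (t / 2^(Suc N))^3 / 256) \<le> ln (\<epsilon> * v * t powr \<gamma> * \<nu> powr \<beta>)"
    using H1 c t nu v e by (subst ln_le_cancel_iff) auto
  then have G1: "2 * ln c + 3 * ln t - 3 * (real N + 1) * ln 2 - 8 * ln 2 \<le> ln \<epsilon> + ln v + \<gamma> * ln t + \<beta> * ln \<nu>"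
    using c t nu v e ln_pow2[of 8] by (simp add: ln_mult ln_div ln_realpow ln_powr algebra_simps)
  have "ln (c / 2) < ln (2 * h * sqrt \<nu> * ((\<epsilon> powr (-(\<alpha>/6)) * sqrt t) * (2 powr (-\<alpha>))^N / a0))"
    using H2 c t nu v e h a0 by (subst ln_less_cancel_iff) auto
  then have G2: "ln c - ln 2 < ln 2 + ln h + ln \<nu> / 2 - (\<alpha>/6) * ln \<epsilon> + ln t / 2 - real N * \<alpha> * ln 2 - ln a0"
    using c t nu v e h a0 by (simp add: ln_mult ln_div ln_realpow ln_powr ln_sqrt algebra_simps)
  have "\<alpha> * (2 * ln c + 3 * ln t - 3 * (real N + 1) * ln 2 - 8 * ln 2) \<le> \<alpha> * (ln \<epsilon> + ln v + \<gamma> * ln t + \<beta> * ln \<nu>)"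
    using G1 a by (intro mult_left_mono) auto
  then have E1: "2 * (\<alpha> * ln c) + 3 * (\<alpha> * ln t) - 3 * (real N * \<alpha> * ln 2) - 11 * (\<alpha> * ln 2)
      \<le> \<alpha> * ln \<epsilon> + \<alpha> * ln v + (\<alpha> * \<gamma>) * ln t + (\<alpha> * \<beta>) * ln \<nu>"
    by (simp add: algebra_simps)
  have "(3 + 2*\<alpha>) * ln c = 3 * ln c + 2 * (\<alpha> * ln c)"
    and "(\<alpha>/2) * ln \<epsilon> = \<alpha> * ln \<epsilon> - 3 * ((\<alpha>/6) * ln \<epsilon>)"
    and "(\<alpha> * (\<gamma> - 3)) * ln t = (\<alpha> * \<gamma>) * ln t - 3 * (\<alpha> * ln t)"
    by (simp_all add: algebra_simps)
  then have "(3 + 2*\<alpha>) * ln c \<le> (9 * ln 2 + 11 * (\<alpha> * ln 2) - 3 * ln a0) + (\<alpha>/2) * ln \<epsilon>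
      + (\<alpha> * ln v + (\<alpha> * (\<gamma> - 3)) * ln t + (\<alpha> * \<beta>) * ln \<nu> + 3 * ln h + (3/2) * ln \<nu> + (3/2) * ln t)"
    using E1 G2 ln_gt_zero[of "2::real"] by linarith
  also have "9 * ln 2 + 11 * (\<alpha> * ln 2) - 3 * ln a0 = ln D"
    unfolding D_def using a0 ln_pow2[of 9] ln_pow2[of 11] by (simp add: ln_mult ln_div ln_powr ln_realpow)
  also have "\<alpha> * ln v + (\<alpha> * (\<gamma> - 3)) * ln t + (\<alpha> * \<beta>) * ln \<nu> + 3 * ln h + (3/2) * ln \<nu> + (3/2) * ln t = ln Y"
    unfolding Y_def using v t nu h by (simp add: ln_mult ln_powr ln_realpow)
  finally have "(3 + 2*\<alpha>) * ln c \<le> ln D + (\<alpha>/2) * ln \<epsilon> + ln Y" .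
  from le_powr_prod_of_ln_le[OF c _ e(1) _ _ this] a0 a v t nu h
  show ?thesis unfolding D_def Y_def by simp
qed

lemma sup_du_le:
  assumes "0 \<le> t" and "\<And>s. s \<in> {0..t} \<Longrightarrow> \<bar>deriv u (y + sqrt \<nu> * b s)\<bar> \<le> X"
  shows "sup_du u \<nu> t y b \<le> X"
  unfolding sup_du_def using assms by (intro cSup_least) auto

lemma detM_ge_of_near_constant_on_dyadic_interval:
  fixes b :: "real \<Rightarrow> real"
  assumes u: "smooth_periodic u" and "0 < t" and b: "continuous_on {0..t} b" and s0: "s0 \<in> {0..t}"
    and near: "\<And>j s. j < 2^n \<Longrightarrow> s0 \<in> {real j * t / 2^n .. real (Suc j) * t / 2^n} \<Longrightarrow>
       s \<in> {real j * t / 2^n .. real (Suc j) * t / 2^n} \<Longrightarrow>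
       \<bar>deriv u (y + sqrt \<nu> * b s) - deriv u (y + sqrt \<nu> * b s0)\<bar> \<le> \<bar>deriv u (y + sqrt \<nu> * b s0)\<bar> / 2"
  shows "\<bar>deriv u (y + sqrt \<nu> * b s0)\<bar>^2 * (t / 2^n)^3 / 256 \<le> detM u \<nu> t y b"
proof -
  define g where "g s = deriv u (y + sqrt \<nu> * b s)" for s
  obtain j where j: "j < 2^n" "s0 \<in> {real j * t / 2^n .. real (Suc j) * t / 2^n}"
    using exists_dyadic_interval[OF \<open>0 < t\<close>, of s0 n] s0 by auto
  have interval: "{real j * t / 2^n .. real j * t / 2^n + t / 2^n} = {real j * t / 2^n .. real (Suc j) * t / 2^n}"
    by (simp add: field_simps)
  have "real j * t / 2^n + t / 2^n \<le> t"
    using dyadic_point_le[of t "Suc j" n] j \<open>0 < t\<close> by (simp add: field_simps)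
  moreover have "continuous_on {0..t} g"
    unfolding g_def by (intro continuous_on_compose2[OF continuous_on_deriv_smooth_periodic(1)[OF u]] continuous_intros b) auto
  ultimately have "\<bar>g s0\<bar>^2 * (t / 2^n)^3 / 256
      \<le> integral {0..t} (\<lambda>r. (integral {r..t} g - (1/t) * integral {0..t} (\<lambda>m. integral {m..t} g))^2)"
    using j near[OF j] \<open>0 < t\<close> unfolding interval[symmetric] g_def
    by (intro tail_integral_deviation_ge_of_near_constant) auto
  then show ?thesis unfolding detM_def g_def .
qed

definition deriv_sup_const :: "real \<Rightarrow> real" where
  "deriv_sup_const \<alpha> = max 16 ((512 * 2048 powr \<alpha> / (1 - 2 powr (-\<alpha>))^3) powr (1 / (3 + 2*\<alpha>)))"

lemma le_of_dyadic_level_bounds: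
  fixes c h \<nu> t v \<epsilon> \<alpha> \<gamma> \<beta> :: real
  assumes "0 < c" "0 \<le> h" "0 < \<nu>" "0 < t" "0 < \<epsilon>" "\<epsilon> \<le> 1" "0 < \<alpha>" "0 < v"
    and lower: "\<And>n. 2 * h * sqrt \<nu> * (\<epsilon> powr (-(\<alpha>/6)) * sqrt t * (2 powr (-\<alpha>))^n / (1 - 2 powr (-\<alpha>))) \<le> c / 2 \<Longrightarrow>
       c^2 * (t / 2^n)^3 / 256 \<le> \<epsilon> * v * t powr \<gamma> * \<nu> powr \<beta>"
  shows "c \<le> deriv_sup_const \<alpha> * \<epsilon> powr (\<alpha> / (2 * (3 + 2*\<alpha>))) *
     max (v powr (1/2) * t powr ((\<gamma> - 3) / 2) * \<nu> powr (\<beta> / 2))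
       (max ((v powr \<alpha> * t powr (\<alpha> * (\<gamma> - 3)) * \<nu> powr (\<alpha> * \<beta>) * h ^ 3
                     * \<nu> powr (3/2) * t powr (3/2)) powr (1 / (3 + 2 * \<alpha>)))
            ((v powr (\<alpha> / 2) * t powr ((\<alpha> * (\<gamma> - 3) + 1) / 2)
                     * \<nu> powr ((\<alpha> * \<beta> + 1) / 2) * h) powr (1 / (1 + \<alpha>))))"
    (is "_ \<le> ?C * ?E * max ?T1 (max ?T2 ?T3)")
proof -
  define r :: real where "r = 2 powr (-\<alpha>)"
  have "0 < r" "r < 1" unfolding r_def using \<open>0 < \<alpha>\<close> by (auto simp: powr_minus inverse_less_1_iff intro: gr_one_powr)
  define K where "K = 2 * h * sqrt \<nu> * (\<epsilon> powr (-(\<alpha>/6)) * sqrt t) / (1 - r)"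
  let ?small = "\<lambda>n. 2 * h * sqrt \<nu> * (\<epsilon> powr (-(\<alpha>/6)) * sqrt t * r^n / (1 - r)) \<le> c / 2"
  have "(\<lambda>n. K * r^n) \<longlonglongrightarrow> 0"
    using \<open>0 < r\<close> \<open>r < 1\<close> by (intro tendsto_mult_right_zero LIMSEQ_power_zero) auto
  then have "eventually (\<lambda>n. K * r^n < c / 2) sequentially"
    using \<open>0 < c\<close> by (intro order_tendstoD(2)) auto
  then obtain N0 where "K * r^N0 < c / 2" by (auto simp: eventually_sequentially)
  moreover have "2 * h * sqrt \<nu> * (\<epsilon> powr (-(\<alpha>/6)) * sqrt t * r^n / (1 - r)) = K * r^n" for n
    unfolding K_def by (simp add: ac_simps)
  ultimately have "\<exists>n. ?small n" by (metis less_imp_le)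
  then consider "?small 0" | N where "\<not> ?small N" "?small (Suc N)"
    using exists_least_lemma[of ?small] by blast
  then show ?thesis
  proof cases
    case 1
    have "c^2 * t^3 / 256 \<le> \<epsilon> * v * t powr \<gamma> * \<nu> powr \<beta>" using lower[of 0] 1 unfolding r_def by simp
    moreover have "\<alpha> / (2 * (3 + 2*\<alpha>)) \<le> 1/2" "0 < \<alpha> / (2 * (3 + 2*\<alpha>))" using \<open>0 < \<alpha>\<close> by (simp_all add: field_simps)
    ultimately have "c \<le> 16 * ?E * ?T1"
      using assms by (intro scale_bound_whole_interval) auto
    also have "\<dots> \<le> ?C * ?E * max ?T1 (max ?T2 ?T3)"
      using assms by (intro mult_mono mult_right_mono) (auto simp: deriv_sup_const_def)
    finally show ?thesis .
  next
    case (2 N)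
    have "0 < h" using 2(1) assms by (cases "h = 0") auto
    have "c^2 * (t / 2^(Suc N))^3 / 256 \<le> \<epsilon> * v * t powr \<gamma> * \<nu> powr \<beta>"
      using lower[of "Suc N"] 2(2) unfolding r_def by simp
    moreover have "c / 2 < 2 * h * sqrt \<nu> * (\<epsilon> powr (-(\<alpha>/6)) * sqrt t * (2 powr (-\<alpha>))^N / (1 - r))"
      using 2(1) unfolding r_def by simp
    ultimately have "c \<le> (512 * 2048 powr \<alpha> / (1 - r)^3) powr (1 / (3 + 2*\<alpha>)) * ?E * ?T2"
      using assms \<open>0 < h\<close> \<open>r < 1\<close> by (intro scale_bound_critical_level) auto
    also have "\<dots> \<le> ?C * ?E * max ?T1 (max ?T2 ?T3)"
      unfolding deriv_sup_const_def r_def using assms by (intro mult_right_mono mult_mono) auto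
    finally show ?thesis .
  qed
qed

lemma sup_du_le_of_detM_le:
  fixes u b :: "real \<Rightarrow> real"
  assumes u: "smooth_periodic u" and "0 < \<nu>" "0 < t" and b: "continuous_on {0..t} b"
    and "0 < \<epsilon>" "\<epsilon> \<le> 1" "0 < \<alpha>" "0 < v"
    and incr: "dyadic_increments_bounded b t (\<lambda>n. \<epsilon> powr (-(\<alpha>/6)) * sqrt t * (2 powr (-\<alpha>))^n)"
    and det: "detM u \<nu> t y b \<le> \<epsilon> * v * t powr \<gamma> * \<nu> powr \<beta>"
  shows "sup_du u \<nu> t y b \<le> deriv_sup_const \<alpha> * \<epsilon> powr (\<alpha> / (2 * (3 + 2*\<alpha>))) *
     max (v powr (1/2) * t powr ((\<gamma> - 3) / 2) * \<nu> powr (\<beta> / 2))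
       (max ((v powr \<alpha> * t powr (\<alpha> * (\<gamma> - 3)) * \<nu> powr (\<alpha> * \<beta>) * (hfun u \<nu> t y b) ^ 3
                     * \<nu> powr (3/2) * t powr (3/2)) powr (1 / (3 + 2 * \<alpha>)))
            ((v powr (\<alpha> / 2) * t powr ((\<alpha> * (\<gamma> - 3) + 1) / 2)
                     * \<nu> powr ((\<alpha> * \<beta> + 1) / 2) * (hfun u \<nu> t y b)) powr (1 / (1 + \<alpha>))))"
    (is "_ \<le> ?bound")
proof (rule sup_du_le)
  define h where "h = hfun u \<nu> t y b"
  define g where "g s = deriv u (y + sqrt \<nu> * b s)" for s
  define W where "W n = \<epsilon> powr (-(\<alpha>/6)) * sqrt t * (2 powr (-\<alpha>))^n / (1 - 2 powr (-\<alpha>))" for n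
  have "0 \<le> h" unfolding h_def using assms hfun_nonneg[OF u _ b] by auto
  have osc: "\<bar>g s - g s'\<bar> \<le> 2 * h * sqrt \<nu> * W n"
    if "j < 2^n" and "s \<in> {real j * t / 2^n .. real (Suc j) * t / 2^n}" and "s' \<in> {real j * t / 2^n .. real (Suc j) * t / 2^n}"
    for n j s s'
  proof -
    have "{real j * t / 2^n .. real (Suc j) * t / 2^n} \<subseteq> {0..t}"
      using dyadic_point_le[of t "Suc j" n] that(1) \<open>0 < t\<close> by auto
    then have "\<bar>g s - g s'\<bar> \<le> h * sqrt \<nu> * \<bar>b s - b s'\<bar>"
      unfolding g_def h_def using that \<open>0 < \<nu>\<close> by (intro deriv_along_path_lipschitz[OF u b]) auto
    also have "\<dots> \<le> h * sqrt \<nu> * (2 * W n)"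
      using incr \<open>0 \<le> h\<close> assms that unfolding W_def
      by (intro mult_left_mono dyadic_oscillation_le[OF _ b]) (auto simp: powr_minus inverse_less_1_iff intro: gr_one_powr)
    finally show ?thesis by simp
  qed
  fix s0 assume s0: "s0 \<in> {0..t}"
  have "\<bar>g s0\<bar> \<le> ?bound"
  proof (cases "g s0 = 0")
    case True
    then show ?thesis
      using assms by (auto simp: deriv_sup_const_def intro!: mult_nonneg_nonneg max.coboundedI1)
  next
    case False
    have "\<bar>g s0\<bar>^2 * (t / 2^n)^3 / 256 \<le> \<epsilon> * v * t powr \<gamma> * \<nu> powr \<beta>"
      if "2 * h * sqrt \<nu> * W n \<le> \<bar>g s0\<bar> / 2" for n
      using detM_ge_of_near_constant_on_dyadic_interval[OF u \<open>0 < t\<close> b s0, of n y \<nu>] osc[of _ n] that det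
      unfolding g_def by fastforce
    then show ?thesis
      unfolding h_def[symmetric] using False \<open>0 \<le> h\<close> assms
      by (intro le_of_dyadic_level_bounds) (auto simp: W_def)
  qed
  then show "\<bar>deriv u (y + sqrt \<nu> * b s0)\<bar> \<le> ?bound" unfolding g_def .
qed (use \<open>0 < t\<close> in simp)

lemma exists_moment_order:
  fixes \<alpha> \<kappa> p :: real
  assumes "0 < \<alpha>" "\<alpha> < 1/2" "0 < \<kappa>"
  obtains k :: nat where "2 \<le> real k * (1 - 2*\<alpha>)" "p \<le> 2 * \<kappa> * real k"
proof
  define k where "k = nat \<lceil>max (2 / (1 - 2*\<alpha>)) (p / (2*\<kappa>))\<rceil>"
  have "2 / (1 - 2*\<alpha>) \<le> real k" "p / (2*\<kappa>) \<le> real k"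
    unfolding k_def by (meson max.bounded_iff real_nat_ceiling_ge)+
  with assms show "2 \<le> real k * (1 - 2*\<alpha>)" "p \<le> 2 * \<kappa> * real k"
    by (simp_all add: field_simps)
qed

lemma almost_implies_of_dyadic_modulus:
  fixes T :: "'z \<Rightarrow> real" and \<alpha> \<kappa> :: real
  assumes BM: "std_brownian_motion M B" and "0 < \<alpha>" "\<alpha> < 1/2" "0 < \<kappa>"
    and T: "\<And>z. z \<in> Z \<Longrightarrow> 0 < T z"
    and pathwise: "\<And>z \<epsilon>. z \<in> Z \<Longrightarrow> 0 < \<epsilon> \<Longrightarrow> \<epsilon> \<le> 1 \<Longrightarrow>
       A z \<epsilon> \<inter> {\<omega>\<in>space M. dyadic_increments_bounded (\<lambda>s. B s \<omega>) (T z) (\<lambda>n. \<epsilon> powr (-\<kappa>) * sqrt (T z) * (2 powr (-\<alpha>))^n)}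
       \<subseteq> Q z \<epsilon>"
  shows "almost_implies M Z A Q"
  unfolding almost_implies_def almost_false_def
proof (intro allI impI)
  fix p :: real
  obtain k where k: "2 \<le> real k * (1 - 2*\<alpha>)" "p \<le> 2 * \<kappa> * real k"
    using exists_moment_order assms(2-4) by blast
  have "\<exists>E\<in>sets M. (A z \<epsilon> - Q z \<epsilon>) \<inter> space M \<subseteq> E \<and> measure M E \<le> 2 * (fact (2*k) / (2^k * fact k)) * \<epsilon> powr p"
    if "z \<in> Z" "0 < \<epsilon>" "\<epsilon> \<le> 1" for z \<epsilon>
    using that pathwise[OF that] T[OF that(1)]
    by (intro bexI[of _ "{\<omega>\<in>space M. \<not> dyadic_increments_bounded (\<lambda>s. B s \<omega>) (T z) (\<lambda>n. \<epsilon> powr (-\<kappa>) * sqrt (T z) * (2 powr (-\<alpha>))^n)}"]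
        conjI brownian_dyadic_increments_unbounded_prob[OF BM _ _ _ k] brownian_dyadic_increments_unbounded_sets[OF BM])
      auto
  then show "\<exists>Cp \<epsilon>0. 0 < \<epsilon>0 \<and> (\<forall>z\<in>Z. \<forall>\<epsilon>. 0 < \<epsilon> \<longrightarrow> \<epsilon> \<le> \<epsilon>0 \<longrightarrow>
      (\<exists>E\<in>sets M. (A z \<epsilon> - Q z \<epsilon>) \<inter> space M \<subseteq> E \<and> measure M E \<le> Cp * \<epsilon> powr p))"
    by (intro exI[of _ "2 * (fact (2*k) / (2^k * fact k))"] exI[of _ 1] conjI) auto
qed

lemma std_brownian_motion_continuous_on:
  assumes "std_brownian_motion M B" "\<omega> \<in> space M"
  shows "continuous_on {0..t} (\<lambda>s. B s \<omega>)"
  using assms unfolding std_brownian_motion_def by (auto intro: continuous_on_subset)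

lemma almost_implies_sup_du_bound:
  fixes u :: "real \<Rightarrow> real" and \<gamma> \<beta> \<alpha> :: real and B :: "real \<Rightarrow> 'a \<Rightarrow> real"
  assumes u: "smooth_periodic u" and "0 < \<alpha>" "\<alpha> < 1/2"
    and BM: "std_brownian_motion M B" and v: "\<forall>\<omega>\<in>space M. v \<omega> > 0"
  shows "almost_implies M {(\<nu>, t, y). 0 < \<nu> \<and> \<nu> \<le> 1 \<and> 0 < t \<and> t \<le> 1 / \<nu>}
      (\<lambda>(\<nu>, t, y) \<epsilon>. {\<omega> \<in> space M.
          detM u \<nu> t y (\<lambda>s. B s \<omega>) \<le> \<epsilon> * v \<omega> * t powr \<gamma> * \<nu> powr \<beta>})
      (\<lambda>(\<nu>, t, y) \<epsilon>. {\<omega> \<in> space M.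
          let h = hfun u \<nu> t y (\<lambda>s. B s \<omega>) in
          sup_du u \<nu> t y (\<lambda>s. B s \<omega>) \<le> deriv_sup_const \<alpha> * \<epsilon> powr (\<alpha> / (2 * (3 + 2*\<alpha>))) *
            max (v \<omega> powr (1/2) * t powr ((\<gamma> - 3) / 2) * \<nu> powr (\<beta> / 2))
             (max ((v \<omega> powr \<alpha> * t powr (\<alpha> * (\<gamma> - 3)) * \<nu> powr (\<alpha> * \<beta>) * h ^ 3
                     * \<nu> powr (3/2) * t powr (3/2)) powr (1 / (3 + 2 * \<alpha>)))
                  ((v \<omega> powr (\<alpha> / 2) * t powr ((\<alpha> * (\<gamma> - 3) + 1) / 2)
                     * \<nu> powr ((\<alpha> * \<beta> + 1) / 2) * h) powr (1 / (1 + \<alpha>))))})"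
  using BM assms(2,3)
proof (rule almost_implies_of_dyadic_modulus[where T = "\<lambda>(\<nu>, t, y). t" and \<kappa> = "\<alpha>/6"])
  fix z :: "real \<times> real \<times> real"
  assume "z \<in> {(\<nu>, t, y). 0 < \<nu> \<and> \<nu> \<le> 1 \<and> 0 < t \<and> t \<le> 1 / \<nu>}"
  then show "0 < (\<lambda>(\<nu>, t, y). t) z" by auto
next
  fix z :: "real \<times> real \<times> real" and \<epsilon> :: real
  assume z: "z \<in> {(\<nu>, t, y). 0 < \<nu> \<and> \<nu> \<le> 1 \<and> 0 < t \<and> t \<le> 1 / \<nu>}" and "0 < \<epsilon>" "\<epsilon> \<le> 1"
  obtain \<nu> t y where z_def: "z = (\<nu>, t, y)" by (cases z)
  show "(\<lambda>(\<nu>, t, y) \<epsilon>. {\<omega> \<in> space M. detM u \<nu> t y (\<lambda>s. B s \<omega>) \<le> \<epsilon> * v \<omega> * t powr \<gamma> * \<nu> powr \<beta>}) z \<epsilon> \<inter>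
    {\<omega> \<in> space M. dyadic_increments_bounded (\<lambda>s. B s \<omega>) ((\<lambda>(\<nu>, t, y). t) z)
        (\<lambda>n. \<epsilon> powr - (\<alpha> / 6) * sqrt ((\<lambda>(\<nu>, t, y). t) z) * (2 powr - \<alpha>) ^ n)}
    \<subseteq> (\<lambda>(\<nu>, t, y) \<epsilon>. {\<omega> \<in> space M. let h = hfun u \<nu> t y (\<lambda>s. B s \<omega>) in
          sup_du u \<nu> t y (\<lambda>s. B s \<omega>) \<le> deriv_sup_const \<alpha> * \<epsilon> powr (\<alpha> / (2 * (3 + 2*\<alpha>))) *
            max (v \<omega> powr (1/2) * t powr ((\<gamma> - 3) / 2) * \<nu> powr (\<beta> / 2))
             (max ((v \<omega> powr \<alpha> * t powr (\<alpha> * (\<gamma> - 3)) * \<nu> powr (\<alpha> * \<beta>) * h ^ 3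
                     * \<nu> powr (3/2) * t powr (3/2)) powr (1 / (3 + 2 * \<alpha>)))
                  ((v \<omega> powr (\<alpha> / 2) * t powr ((\<alpha> * (\<gamma> - 3) + 1) / 2)
                     * \<nu> powr ((\<alpha> * \<beta> + 1) / 2) * h) powr (1 / (1 + \<alpha>))))}) z \<epsilon>"
    using z v \<open>0 < \<epsilon>\<close> \<open>\<epsilon> \<le> 1\<close> \<open>0 < \<alpha>\<close> unfolding z_def Let_def case_prod_conv
    by (clarify; intro conjI sup_du_le_of_detM_le[OF u] std_brownian_motion_continuous_on[OF BM]) auto
qed (simp_all add: \<open>0 < \<alpha>\<close>)

theorem lemma2p3:
  fixes u :: "real \<Rightarrow> real" and \<gamma> \<beta> \<alpha> :: real
  assumes "smooth_periodic u" and "\<gamma> > 0" and "\<beta> > 0" and "0 < \<alpha>" and "\<alpha> < 1/2"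
  shows "\<exists>C>0. \<exists>q>0. \<forall>(M :: 'a measure) B v.
    std_brownian_motion M B \<longrightarrow> v \<in> borel_measurable M \<longrightarrow> (\<forall>\<omega>\<in>space M. v \<omega> > 0) \<longrightarrow>
    almost_implies M {(\<nu>, t, y). 0 < \<nu> \<and> \<nu> \<le> 1 \<and> 0 < t \<and> t \<le> 1 / \<nu>}
      (\<lambda>(\<nu>, t, y) \<epsilon>. {\<omega> \<in> space M.
          detM u \<nu> t y (\<lambda>s. B s \<omega>) \<le> \<epsilon> * v \<omega> * t powr \<gamma> * \<nu> powr \<beta>})
      (\<lambda>(\<nu>, t, y) \<epsilon>. {\<omega> \<in> space M.
          let h = hfun u \<nu> t y (\<lambda>s. B s \<omega>) in
          sup_du u \<nu> t y (\<lambda>s. B s \<omega>) \<le> C * \<epsilon> powr q *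
            max (v \<omega> powr (1/2) * t powr ((\<gamma> - 3) / 2) * \<nu> powr (\<beta> / 2))
             (max ((v \<omega> powr \<alpha> * t powr (\<alpha> * (\<gamma> - 3)) * \<nu> powr (\<alpha> * \<beta>) * h ^ 3
                     * \<nu> powr (3/2) * t powr (3/2)) powr (1 / (3 + 2 * \<alpha>)))
                  ((v \<omega> powr (\<alpha> / 2) * t powr ((\<alpha> * (\<gamma> - 3) + 1) / 2)
                     * \<nu> powr ((\<alpha> * \<beta> + 1) / 2) * h) powr (1 / (1 + \<alpha>))))})"
proof -
  have "0 < deriv_sup_const \<alpha>" by (simp add: deriv_sup_const_def)
  moreover have "0 < \<alpha> / (2 * (3 + 2*\<alpha>))" using \<open>0 < \<alpha>\<close> by simp
  ultimately show ?thesis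
    by (intro exI[of _ "deriv_sup_const \<alpha>"] exI[of _ "\<alpha> / (2 * (3 + 2*\<alpha>))"] conjI allI impI
        almost_implies_sup_du_bound[OF assms(1,4,5)])
qed

end
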